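(* Let $w:\{0,1\}^L\to\mathbb{R}_{\ge 0}$ be a generic fitness landscape inducing the standard staircase triangulation, and let $g,g'$ be genotypes with $g'\subset g$. For every pair of genotypes $\{h,h'\}$ with $X_{h,h'}=X_{g,g'}$ we have $w_g+w_{g'}\ge w_h+w_{h'}$, with equality only if $\{h,h'\}=\{g,g'\}$.
   Context: Genotypes $g\in\{0,1\}^L$ are identified with subsets $\{i:g_i=1\}$ of $\{1,\dots,L\}$ and with vertices of $[0,1]^L$. For genotypes $g,g'$, $X_{g,g'}\in[0,1]^L$ is defined by $X_{g,g'}(i)=\tfrac12(g_i+g'_i)$. The triangulation induced by $w$ is the regular subdivision of $[0,1]^L$ obtained by projecting the upper faces of $\mathrm{conv}\{(g,w_g)\}\subset\mathbb{R}^{L+1}$; $w$ is generic if all $w_g$ are distinct and this subdivision is a triangulation. The standard staircase triangulation consists of the $L!$ simplices $\{g_0\subset g_1\subset\cdots\subset g_L\}$ with $g_0=\emptyset$, $g_L=\{1,\dots,L\}$, $|g_k|=k$. *)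

theory Defs
  imports Complex_Main
begin

text \<open>Genotypes are subsets of {1..L}; the genotype g corresponds to the 0/1 vertex of
  the cube with g_i = 1 iff i in g.  Points of R^L are functions nat => real, only the
  coordinates 1..L being relevant.  For a 0/1 vertex g and a linear functional a,
  the value a . g is the sum of a i over i in g.\<close>

definition genotypes :: "nat \<Rightarrow> nat set set" where
  "genotypes L = Pow {1..L}"

definition Xpt :: "nat \<Rightarrow> nat set \<Rightarrow> nat set \<Rightarrow> nat \<Rightarrow> real" where
  "Xpt L g g' = (\<lambda>i. if i \<in> {1..L} then ((if i \<in> g then 1 else 0) + (if i \<in> g' then 1 else 0)) / 2 else 0)"

text \<open>Vertex sets of upper faces of conv{(g, w g)}: the lifted points lying on a
  non-vertical supporting hyperplane that lies above all lifted points.\<close>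
definition upper_face :: "nat \<Rightarrow> (nat set \<Rightarrow> real) \<Rightarrow> nat set set \<Rightarrow> bool" where
  "upper_face L w S \<longleftrightarrow> (\<exists>(a::nat \<Rightarrow> real) (c::real).
      (\<forall>g\<in>genotypes L. w g \<le> (\<Sum>i\<in>g. a i) + c) \<and>
      S = {g \<in> genotypes L. w g = (\<Sum>i\<in>g. a i) + c})"

text \<open>The affine hull of the vertices in S is all of R^L: the only affine function
  vanishing on S is zero.\<close>
definition full_dim :: "nat \<Rightarrow> nat set set \<Rightarrow> bool" where
  "full_dim L S \<longleftrightarrow> (\<forall>(a::nat \<Rightarrow> real) (c::real).
      (\<forall>g\<in>S. (\<Sum>i\<in>g. a i) + c = 0) \<longrightarrow> (\<forall>i\<in>{1..L}. a i = 0) \<and> c = 0)"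

definition aff_indep :: "nat \<Rightarrow> nat set set \<Rightarrow> bool" where
  "aff_indep L S \<longleftrightarrow> (\<forall>\<mu> :: nat set \<Rightarrow> real.
      (\<Sum>g\<in>S. \<mu> g) = 0 \<and> (\<forall>i\<in>{1..L}. (\<Sum>g\<in>S. (if i \<in> g then \<mu> g else 0)) = 0)
      \<longrightarrow> (\<forall>g\<in>S. \<mu> g = 0))"

text \<open>Maximal cells of the regular subdivision induced by w (projections of the
  full-dimensional upper faces), given by their vertex sets.\<close>
definition max_cells :: "nat \<Rightarrow> (nat set \<Rightarrow> real) \<Rightarrow> nat set set set" where
  "max_cells L w = {S. upper_face L w S \<and> full_dim L S}"

definition is_triangulation :: "nat \<Rightarrow> (nat set \<Rightarrow> real) \<Rightarrow> bool" where
  "is_triangulation L w \<longleftrightarrow> (\<forall>S. upper_face L w S \<longrightarrow> aff_indep L S)"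

definition generic :: "nat \<Rightarrow> (nat set \<Rightarrow> real) \<Rightarrow> bool" where
  "generic L w \<longleftrightarrow> inj_on w (genotypes L) \<and> is_triangulation L w"

definition staircase_simplex :: "nat \<Rightarrow> nat set set \<Rightarrow> bool" where
  "staircase_simplex L S \<longleftrightarrow> (\<exists>ch :: nat \<Rightarrow> nat set.
      (\<forall>k\<le>L. ch k \<subseteq> {1..L} \<and> card (ch k) = k) \<and>
      (\<forall>k<L. ch k \<subseteq> ch (Suc k)) \<and> S = ch ` {0..L})"

definition induces_staircase :: "nat \<Rightarrow> (nat set \<Rightarrow> real) \<Rightarrow> bool" where
  "induces_staircase L w \<longleftrightarrow> max_cells L w = {S. staircase_simplex L S}"

end

theory Submission
  imports Defs
begin

text \<open>The staircase cells are the chains of subsets, so g' \<subset> g lie in a common maximal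
  cell S. Let \<phi>(x) = (\<Sum>i\<in>x. a i) + c be the affine function whose graph supports the upper
  face over S. Since X_{h,h'} = X_{g,g'} means that h, h' have the same union and
  intersection as g, g', additivity of \<phi> gives \<phi> h + \<phi> h' = \<phi> g + \<phi> g', and w \<le> \<phi> with
  equality exactly on S yields w h + w h' \<le> w g + w g'. In the equality case h, h' \<in> S, and
  then the affine dependence g + g' = h + h' among vertices of the simplex S must be trivial.\<close>

lemma staircase_simplex_prefixes:
  assumes "distinct xs" and "set xs = {1..L}"
  shows "staircase_simplex L ((\<lambda>k. set (take k xs)) ` {0..L})"
proof -
  have len: "length xs = L" using assms distinct_card by fastforce
  show ?thesis
    unfolding staircase_simplex_def
  proof (intro exI conjI allI impI)
    fix k assume "k \<le> L"
    then show "card (set (take k xs)) = k"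
      using assms(1) len by (simp add: distinct_card)
    show "set (take k xs) \<subseteq> {1..L}"
      using assms(2) set_take_subset by metis
  next
    fix k show "set (take k xs) \<subseteq> set (take (Suc k) xs)"
      by (simp add: set_take_subset_set_take)
  qed simp
qed

lemma staircase_simplex_through_subset:
  assumes g: "g \<in> genotypes L" and sub: "g' \<subseteq> g"
  shows "\<exists>S. staircase_simplex L S \<and> g \<in> S \<and> g' \<in> S"
proof -
  have g_sub: "g \<subseteq> {1..L}" using g by (simp add: genotypes_def)
  have fin: "finite g" "finite g'"
    using finite_subset[OF g_sub] finite_subset[OF sub] by simp_all
  define ys where "ys = sorted_list_of_set g' @ sorted_list_of_set (g - g')"
  define xs where "xs = ys @ sorted_list_of_set ({1..L} - g)"
  define S where "S = (\<lambda>k. set (take k xs)) ` {0..L}"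
  have ys: "set ys = g" "distinct ys" using fin sub by (auto simp: ys_def)
  have card: "card g' \<le> card g" "card g \<le> L"
    using card_mono[OF fin(1) sub] card_mono[OF finite_atLeastAtMost g_sub] by simp_all
  have "staircase_simplex L S"
    unfolding S_def using ys g_sub by (intro staircase_simplex_prefixes) (auto simp: xs_def)
  moreover have "g \<in> S"
  proof -
    have "length ys = card g" using ys by (metis distinct_card)
    then have "g = set (take (card g) xs)" using ys by (simp add: xs_def)
    then show ?thesis unfolding S_def using card by (intro rev_image_eqI) auto
  qed
  moreover have "g' \<in> S"
  proof -
    have "g' = set (take (card g') xs)" using fin by (simp add: xs_def ys_def)
    then show ?thesis unfolding S_def using card by (intro rev_image_eqI) auto
  qed
  ultimately show ?thesis by blast
qed

lemma Xpt_eq_iff: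
  assumes "h \<in> genotypes L" "h' \<in> genotypes L" "g \<in> genotypes L" "g' \<in> genotypes L"
  shows "Xpt L h h' = Xpt L g g' \<longleftrightarrow> h \<union> h' = g \<union> g' \<and> h \<inter> h' = g \<inter> g'"
proof -
  have coordinate: "((if a then 1 else 0) + (if b then 1 else 0)) / 2
      = ((if c then 1 else 0) + (if d then 1 else 0)) / (2::real)
      \<longleftrightarrow> (a \<or> b \<longleftrightarrow> c \<or> d) \<and> (a \<and> b \<longleftrightarrow> c \<and> d)" for a b c d
    by (cases a; cases b; cases c; cases d) simp_all
  have if_eq: "(if P then x else 0) = (if P then y else 0) \<longleftrightarrow> (P \<longrightarrow> x = y)"
    for P and x y :: real
    by simp
  have "Xpt L h h' = Xpt L g g' \<longleftrightarrow> (\<forall>i\<in>{1..L}.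
      (i \<in> h \<or> i \<in> h' \<longleftrightarrow> i \<in> g \<or> i \<in> g') \<and> (i \<in> h \<and> i \<in> h' \<longleftrightarrow> i \<in> g \<and> i \<in> g'))"
    by (simp only: fun_eq_iff Xpt_def if_eq coordinate Ball_def)
  also have "\<dots> \<longleftrightarrow> h \<union> h' = g \<union> g' \<and> h \<inter> h' = g \<inter> g'"
    using assms unfolding genotypes_def by blast
  finally show ?thesis .
qed

lemma upper_face_pair_sum:
  assumes face: "upper_face L w S" and "g \<in> S" "g' \<in> S"
    and h: "h \<in> genotypes L" "h' \<in> genotypes L"
    and Un: "h \<union> h' = g \<union> g'" and Int: "h \<inter> h' = g \<inter> g'"
  shows "w h + w h' \<le> w g + w g'"
    and "w h + w h' = w g + w g' \<Longrightarrow> h \<in> S \<and> h' \<in> S"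
proof -
  obtain a c where above: "\<forall>x\<in>genotypes L. w x \<le> (\<Sum>i\<in>x. a i) + c"
    and S: "S = {x \<in> genotypes L. w x = (\<Sum>i\<in>x. a i) + c}"
    using face unfolding upper_face_def by blast
  have fin: "finite x" if "x \<in> genotypes L" for x
    using that finite_subset[of x "{1..L}"] by (simp add: genotypes_def)
  have g: "g \<in> genotypes L" "g' \<in> genotypes L" using \<open>g \<in> S\<close> \<open>g' \<in> S\<close> S by auto
  have "sum a h + sum a h' = sum a (h \<union> h') + sum a (h \<inter> h')"
    using h fin by (simp add: sum.union_inter)
  also have "\<dots> = sum a g + sum a g'"
    using g fin by (simp add: Un Int sum.union_inter)
  finally have additive: "sum a h + sum a h' = sum a g + sum a g'" .
  have "w g = sum a g + c" "w g' = sum a g' + c"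
    using \<open>g \<in> S\<close> \<open>g' \<in> S\<close> S by auto
  moreover have "w h \<le> sum a h + c" "w h' \<le> sum a h' + c" using above h by auto
  ultimately show "w h + w h' \<le> w g + w g'"
    and "w h + w h' = w g + w g' \<Longrightarrow> h \<in> S \<and> h' \<in> S"
    using additive h S by auto
qed

lemma aff_indep_pair_unique:
  assumes indep: "aff_indep L S" and "finite S"
    and "g \<in> S" "g' \<in> S" "h \<in> S" "h' \<in> S"
    and Un: "h \<union> h' = g \<union> g'" and Int: "h \<inter> h' = g \<inter> g'"
  shows "{h, h'} = {g, g'}"
proof -
  define \<mu> :: "nat set \<Rightarrow> real"
    where "\<mu> x = of_bool (x = g) + of_bool (x = g') - of_bool (x = h) - of_bool (x = h')" for x
  have delta: "(\<Sum>x\<in>S. if P x then of_bool (x = y) else 0) = (of_bool (P y) :: real)"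
    if "y \<in> S" for P y
  proof -
    have "(\<Sum>x\<in>S. if P x then of_bool (x = y) else 0) = (\<Sum>x\<in>S. if y = x then of_bool (P y) else 0)"
      by (intro sum.cong) auto
    then show ?thesis using \<open>finite S\<close> that by simp
  qed
  have restricted_sum: "(\<Sum>x\<in>S. if P x then \<mu> x else 0)
      = of_bool (P g) + of_bool (P g') - of_bool (P h) - of_bool (P h')" for P
  proof -
    have "(\<Sum>x\<in>S. if P x then \<mu> x else 0) = (\<Sum>x\<in>S. (if P x then of_bool (x = g) else 0)
        + (if P x then of_bool (x = g') else 0) - (if P x then of_bool (x = h) else 0)
        - (if P x then of_bool (x = h') else 0))"
      by (intro sum.cong) (auto simp: \<mu>_def)
    then show ?thesis using delta assms(3-6) by (simp add: sum.distrib sum_subtractf)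
  qed
  have "of_bool (i \<in> g) + of_bool (i \<in> g') = (of_bool (i \<in> h) + of_bool (i \<in> h') :: real)" for i
    using Un Int by (cases "i \<in> g \<inter> g'"; cases "i \<in> g \<union> g'") auto
  then have "\<forall>x\<in>S. \<mu> x = 0"
    using indep restricted_sum[of "\<lambda>_. True"] restricted_sum[of "\<lambda>x. _ \<in> x"]
    unfolding aff_indep_def by simp
  then have "\<mu> g = 0" "\<mu> g' = 0" "\<mu> h = 0" using assms(3-5) by auto
  then show ?thesis unfolding \<mu>_def
    by (cases "g = h"; cases "g = h'"; cases "g' = h"; cases "g' = h'"; cases "g = g'")
      (simp_all add: insert_commute)
qed

theorem mainTheorem9:
  fixes L :: nat and w :: "nat set \<Rightarrow> real" and g g' :: "nat set"
  assumes nonneg: "\<forall>x\<in>genotypes L. w x \<ge> 0"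
    and gen: "generic L w"
    and stair: "induces_staircase L w"
    and g: "g \<in> genotypes L" and g': "g' \<in> genotypes L"
    and sub: "g' \<subset> g"
  shows "\<forall>h\<in>genotypes L. \<forall>h'\<in>genotypes L. Xpt L h h' = Xpt L g g' \<longrightarrow>
           w h + w h' \<le> w g + w g' \<and>
           (w g + w g' = w h + w h' \<longrightarrow> {h, h'} = {g, g'})"
proof (intro ballI impI conjI)
  fix h h' assume h: "h \<in> genotypes L" and h': "h' \<in> genotypes L"
    and "Xpt L h h' = Xpt L g g'"
  then have Un: "h \<union> h' = g \<union> g'" and Int: "h \<inter> h' = g \<inter> g'"
    using Xpt_eq_iff[OF h h' g g'] by simp_all
  obtain S where "staircase_simplex L S" and S: "g \<in> S" "g' \<in> S"
    using staircase_simplex_through_subset[OF g] sub by auto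
  then have face: "upper_face L w S"
    using stair by (auto simp: induces_staircase_def max_cells_def)
  show "w h + w h' \<le> w g + w g'"
    using upper_face_pair_sum(1)[OF face S h h' Un Int] .
  assume "w g + w g' = w h + w h'"
  then have "h \<in> S" "h' \<in> S"
    using upper_face_pair_sum(2)[OF face S h h' Un Int] by auto
  moreover have "aff_indep L S"
    using gen face by (simp add: generic_def is_triangulation_def)
  moreover have "finite S"
  proof (rule finite_subset)
    show "S \<subseteq> genotypes L" using face by (auto simp: upper_face_def)
  qed (simp add: genotypes_def)
  ultimately show "{h, h'} = {g, g'}"
    using aff_indep_pair_unique[OF _ _ S _ _ Un Int] by simp
qed

end
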